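(* Let $(g,[\cdot,\cdot]_1,[\cdot,\cdot]_2,\alpha,\beta)$ be a compatible BiHom-Lie algebra and $(V,\bullet_1,\bullet_2,\alpha_V,\beta_V)$ a representation of it, where $\alpha,\beta,\alpha_V,\beta_V$ are bijective. Then $g\oplus V$ carries a compatible BiHom-Lie algebra structure $(g\oplus V,[\cdot,\cdot]^{\ltimes}_1,[\cdot,\cdot]^{\ltimes}_2,\alpha\oplus\alpha_V,\beta\oplus\beta_V)$, where $(\alpha\oplus\alpha_V)(p,a)=(\alpha(p),\alpha_V(a))$, $(\beta\oplus\beta_V)(p,a)=(\beta(p),\beta_V(a))$ and, for $i=1,2$, $$[(p,a),(q,b)]^{\ltimes}_i=\big([p,q]_i,\ p\bullet_i b-(\alpha^{-1}\beta(q))\bullet_i(\alpha_V\beta_V^{-1}(a))\big),\qquad (p,a),(q,b)\in g\oplus V.$$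
   Context: A BiHom-Lie algebra is a 4-tuple $(g,[\cdot,\cdot],\alpha,\beta)$ with $\alpha,\beta:g\to g$ linear and $[\cdot,\cdot]$ bilinear such that $\alpha\circ\beta=\beta\circ\alpha$, $[\beta(p),\alpha(q)]=-[\beta(q),\alpha(p)]$ and $[\beta^{2}(p),[\beta(q),\alpha(r)]]+[\beta^{2}(q),[\beta(r),\alpha(p)]]+[\beta^{2}(r),[\beta(p),\alpha(q)]]=0$. A compatible BiHom-Lie algebra $(g,[\cdot,\cdot]_1,[\cdot,\cdot]_2,\alpha,\beta)$: both $(g,[\cdot,\cdot]_i,\alpha,\beta)$ are BiHom-Lie algebras and $(g,\lambda[\cdot,\cdot]_1+\eta[\cdot,\cdot]_2,\alpha,\beta)$ is a BiHom-Lie algebra for all $\lambda,\eta\in\mathbb{K}$. A representation of a BiHom-Lie algebra $(g,[\cdot,\cdot],\alpha,\beta)$ is $(V,\bullet,\alpha_V,\beta_V)$ with $\alpha_V,\beta_V:V\to V$ commuting linear maps and $\bullet:g\otimes V\to V$ bilinear satisfying, for all $p,q\in g$, $v\in V$: $\alpha(p)\bullet\alpha_V(v)=\alpha_V(p\bullet v)$; $\beta(p)\bullet\beta_V(v)=\beta_V(p\bullet v)$; $[\beta(p),q]\bullet\beta_V(v)=\alpha\beta(p)\bullet(q\bullet v)-\beta(q)\bullet(\alpha(p)\bullet v)$. A representation of the compatible BiHom-Lie algebra is $(V,\bullet_1,\bullet_2,\alpha_V,\beta_V)$ such that $(V,\bullet_i,\alpha_V,\beta_V)$ is a representation of $(g,[\cdot,\cdot]_i,\alpha,\beta)$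 for $i=1,2$ and $[\beta(p),q]_1\bullet_2\beta_V(v)+[\beta(p),q]_2\bullet_1\beta_V(v)=\alpha\beta(p)\bullet_1(q\bullet_2 v)-\beta(q)\bullet_2(\alpha(p)\bullet_1 v)+\alpha\beta(p)\bullet_2(q\bullet_1 v)-\beta(q)\bullet_1(\alpha(p)\bullet_2 v)$ for all $p,q\in g$, $v\in V$. *)

theory Defs
  imports Main "HOL.Vector_Spaces" "HOL-Library.Product_Plus"
begin

definition bilinear_map ::
  "('k::field \<Rightarrow> 'a::ab_group_add \<Rightarrow> 'a) \<Rightarrow> ('k \<Rightarrow> 'b::ab_group_add \<Rightarrow> 'b) \<Rightarrow>
   ('k \<Rightarrow> 'c::ab_group_add \<Rightarrow> 'c) \<Rightarrow> ('a \<Rightarrow> 'b \<Rightarrow> 'c) \<Rightarrow> bool" where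
  "bilinear_map s1 s2 s3 f \<longleftrightarrow>
     (\<forall>x. Vector_Spaces.linear s2 s3 (f x)) \<and> (\<forall>y. Vector_Spaces.linear s1 s3 (\<lambda>x. f x y))"

definition bihom_lie_algebra ::
  "('k::field \<Rightarrow> 'g::ab_group_add \<Rightarrow> 'g) \<Rightarrow> ('g \<Rightarrow> 'g \<Rightarrow> 'g) \<Rightarrow> ('g \<Rightarrow> 'g) \<Rightarrow> ('g \<Rightarrow> 'g) \<Rightarrow> bool" where
  "bihom_lie_algebra s br \<alpha> \<beta> \<longleftrightarrow>
     vector_space s \<and>
     Vector_Spaces.linear s s \<alpha> \<and> Vector_Spaces.linear s s \<beta> \<and>
     bilinear_map s s s br \<and>
     \<alpha> \<circ> \<beta> = \<beta> \<circ> \<alpha> \<and>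
     (\<forall>p q. br (\<beta> p) (\<alpha> q) = - br (\<beta> q) (\<alpha> p)) \<and>
     (\<forall>p q r. br (\<beta> (\<beta> p)) (br (\<beta> q) (\<alpha> r)) + br (\<beta> (\<beta> q)) (br (\<beta> r) (\<alpha> p))
              + br (\<beta> (\<beta> r)) (br (\<beta> p) (\<alpha> q)) = 0)"

definition compatible_bihom_lie_algebra ::
  "('k::field \<Rightarrow> 'g::ab_group_add \<Rightarrow> 'g) \<Rightarrow> ('g \<Rightarrow> 'g \<Rightarrow> 'g) \<Rightarrow> ('g \<Rightarrow> 'g \<Rightarrow> 'g) \<Rightarrow>
   ('g \<Rightarrow> 'g) \<Rightarrow> ('g \<Rightarrow> 'g) \<Rightarrow> bool" where
  "compatible_bihom_lie_algebra s br1 br2 \<alpha> \<beta> \<longleftrightarrow>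
     bihom_lie_algebra s br1 \<alpha> \<beta> \<and> bihom_lie_algebra s br2 \<alpha> \<beta> \<and>
     (\<forall>c d. bihom_lie_algebra s (\<lambda>x y. s c (br1 x y) + s d (br2 x y)) \<alpha> \<beta>)"

definition bihom_lie_rep ::
  "('k::field \<Rightarrow> 'g::ab_group_add \<Rightarrow> 'g) \<Rightarrow> ('g \<Rightarrow> 'g \<Rightarrow> 'g) \<Rightarrow> ('g \<Rightarrow> 'g) \<Rightarrow> ('g \<Rightarrow> 'g) \<Rightarrow>
   ('k \<Rightarrow> 'v::ab_group_add \<Rightarrow> 'v) \<Rightarrow> ('g \<Rightarrow> 'v \<Rightarrow> 'v) \<Rightarrow> ('v \<Rightarrow> 'v) \<Rightarrow> ('v \<Rightarrow> 'v) \<Rightarrow> bool" where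
  "bihom_lie_rep s br \<alpha> \<beta> sV act \<alpha>V \<beta>V \<longleftrightarrow>
     vector_space sV \<and>
     Vector_Spaces.linear sV sV \<alpha>V \<and> Vector_Spaces.linear sV sV \<beta>V \<and>
     \<alpha>V \<circ> \<beta>V = \<beta>V \<circ> \<alpha>V \<and>
     bilinear_map s sV sV act \<and>
     (\<forall>p v. act (\<alpha> p) (\<alpha>V v) = \<alpha>V (act p v)) \<and>
     (\<forall>p v. act (\<beta> p) (\<beta>V v) = \<beta>V (act p v)) \<and>
     (\<forall>p q v. act (br (\<beta> p) q) (\<beta>V v) = act (\<alpha> (\<beta> p)) (act q v) - act (\<beta> q) (act (\<alpha> p) v))"

definition compatible_bihom_lie_rep ::
  "('k::field \<Rightarrow> 'g::ab_group_add \<Rightarrow> 'g) \<Rightarrow> ('g \<Rightarrow> 'g \<Rightarrow> 'g) \<Rightarrow> ('g \<Rightarrow> 'g \<Rightarrow> 'g) \<Rightarrow>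
   ('g \<Rightarrow> 'g) \<Rightarrow> ('g \<Rightarrow> 'g) \<Rightarrow>
   ('k \<Rightarrow> 'v::ab_group_add \<Rightarrow> 'v) \<Rightarrow> ('g \<Rightarrow> 'v \<Rightarrow> 'v) \<Rightarrow> ('g \<Rightarrow> 'v \<Rightarrow> 'v) \<Rightarrow>
   ('v \<Rightarrow> 'v) \<Rightarrow> ('v \<Rightarrow> 'v) \<Rightarrow> bool" where
  "compatible_bihom_lie_rep s br1 br2 \<alpha> \<beta> sV act1 act2 \<alpha>V \<beta>V \<longleftrightarrow>
     bihom_lie_rep s br1 \<alpha> \<beta> sV act1 \<alpha>V \<beta>V \<and>
     bihom_lie_rep s br2 \<alpha> \<beta> sV act2 \<alpha>V \<beta>V \<and>
     (\<forall>p q v. act2 (br1 (\<beta> p) q) (\<beta>V v) + act1 (br2 (\<beta> p) q) (\<beta>V v) =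
        act1 (\<alpha> (\<beta> p)) (act2 q v) - act2 (\<beta> q) (act1 (\<alpha> p) v)
        + act2 (\<alpha> (\<beta> p)) (act1 q v) - act1 (\<beta> q) (act2 (\<alpha> p) v))"

definition sum_scale :: "('k \<Rightarrow> 'g \<Rightarrow> 'g) \<Rightarrow> ('k \<Rightarrow> 'v \<Rightarrow> 'v) \<Rightarrow> 'k \<Rightarrow> 'g \<times> 'v \<Rightarrow> 'g \<times> 'v" where
  "sum_scale s sV c x = (s c (fst x), sV c (snd x))"

definition sum_map :: "('g \<Rightarrow> 'g) \<Rightarrow> ('v \<Rightarrow> 'v) \<Rightarrow> 'g \<times> 'v \<Rightarrow> 'g \<times> 'v" where
  "sum_map f fV x = (f (fst x), fV (snd x))"

definition semidirect_bracket ::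
  "('g \<Rightarrow> 'g \<Rightarrow> 'g) \<Rightarrow> ('g \<Rightarrow> 'v::ab_group_add \<Rightarrow> 'v) \<Rightarrow> ('g \<Rightarrow> 'g) \<Rightarrow> ('g \<Rightarrow> 'g) \<Rightarrow>
   ('v \<Rightarrow> 'v) \<Rightarrow> ('v \<Rightarrow> 'v) \<Rightarrow> 'g \<times> 'v \<Rightarrow> 'g \<times> 'v \<Rightarrow> 'g \<times> 'v" where
  "semidirect_bracket br act \<alpha> \<beta> \<alpha>V \<beta>V x y =
     (br (fst x) (fst y),
      act (fst x) (snd y) - act (inv \<alpha> (\<beta> (fst y))) (\<alpha>V (inv \<beta>V (snd x))))"

end

theory Submission
  imports Defs
begin

(* On arguments of the form (\<beta> p, \<beta>V a) and (\<alpha> q, \<alpha>V b) the twists \<alpha>^-1 \<beta> and \<alpha>V \<beta>V^-1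
   cancel, and the semidirect bracket becomes
     ([\<beta> p, \<alpha> q], \<beta> p \<bullet> \<alpha>V b - \<beta> q \<bullet> \<alpha>V a).
   Skew-symmetry is then immediate, and the V-component of the BiHom-Jacobi identity reduces, via the
   equivariance of the action, to the representation identity for [\<beta> q, \<alpha> r]; its six terms
   cancel in pairs.
   A linear combination of the two semidirect brackets is the semidirect bracket of the combined
   bracket and the combined action, and the compatibility condition on the representation says
   exactly that the combined action is a representation of the combined bracket. So everything
   reduces to the case of a single BiHom-Lie algebra. *)

lemma linear_map_simps:
  assumes "Vector_Spaces.linear s1 s2 f"
  shows "f (x + y) = f x + f y" "f (s1 c x) = s2 c (f x)" "f (x - y) = f x - f y" "f (- x) = - f x"
  using assms module_hom.add[of s1 s2 f] module_hom.scale[of s1 s2 f] module_hom.diff[of s1 s2 f]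
    module_hom.neg[of s1 s2 f]
  unfolding module_hom_iff_linear by simp_all

lemma linear_inv_of_bij:
  assumes lin: "Vector_Spaces.linear s1 s2 f" and "bij f"
  shows "Vector_Spaces.linear s2 s1 (inv f)"
proof -
  have f_inv: "f (inv f y) = y" for y
    using \<open>bij f\<close> by (simp add: bij_is_surj surj_f_inv_f)
  have inv_eqI: "inv f y = x" if "f x = y" for x y
    using \<open>bij f\<close> that by (simp add: bij_is_inj inv_f_eq)
  have "inv f (x + y) = inv f x + inv f y" "inv f (s2 c x) = s1 c (inv f x)" for c x y
    by (rule inv_eqI, simp add: linear_map_simps[OF lin] f_inv)+
  then show ?thesis
    using lin by (simp add: linear_iff)
qed

lemma bilinear_map_simps:
  assumes "bilinear_map s1 s2 s3 f"
  shows "f x (u + v) = f x u + f x v" "f x (s2 c u) = s3 c (f x u)"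
    "f x (u - v) = f x u - f x v" "f x (- u) = - f x u"
    "f (x + y) u = f x u + f y u" "f (s1 c x) u = s3 c (f x u)"
    "f (x - y) u = f x u - f y u" "f (- x) u = - f x u"
  using assms linear_map_simps[of s2 s3 "f x"] linear_map_simps[of s1 s3 "\<lambda>x. f x u"]
  unfolding bilinear_map_def by simp_all

lemma vector_space_sum_scale:
  assumes "vector_space s" and "vector_space sV"
  shows "vector_space (sum_scale s sV)"
  using assms unfolding vector_space_def sum_scale_def
  by (auto simp: algebra_simps)

lemma linear_sum_map:
  assumes "vector_space s" "vector_space sV"
    and "Vector_Spaces.linear s s f" and "Vector_Spaces.linear sV sV fV"
  shows "Vector_Spaces.linear (sum_scale s sV) (sum_scale s sV) (sum_map f fV)"
  using assms vector_space_sum_scale[OF assms(1,2)]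
  by (simp add: linear_iff sum_map_def sum_scale_def)

lemma bilinear_semidirect_bracket:
  assumes "vector_space s" and "vector_space sV"
    and br: "bilinear_map s s s br" and act: "bilinear_map s sV sV act"
    and "Vector_Spaces.linear s s \<beta>" and "Vector_Spaces.linear s s (inv \<alpha>)"
    and "Vector_Spaces.linear sV sV \<alpha>V" and "Vector_Spaces.linear sV sV (inv \<beta>V)"
  shows "bilinear_map (sum_scale s sV) (sum_scale s sV) (sum_scale s sV)
           (semidirect_bracket br act \<alpha> \<beta> \<alpha>V \<beta>V)"
proof -
  have "sV c (x - y) = sV c x - sV c y" for c x y
    using \<open>vector_space sV\<close> by (simp add: module.scale_right_diff_distrib module_iff_vector_space)
  then show ?thesis
    using assms vector_space_sum_scale[OF assms(1,2)]
    unfolding bilinear_map_def linear_iff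
    by (simp add: semidirect_bracket_def sum_scale_def bilinear_map_simps[OF br]
        bilinear_map_simps[OF act] linear_map_simps[OF assms(5)] linear_map_simps[OF assms(6)]
        linear_map_simps[OF assms(7)] linear_map_simps[OF assms(8)] algebra_simps)
qed

lemma semidirect_bracket_twisted:
  assumes "\<alpha> \<circ> \<beta> = \<beta> \<circ> \<alpha>" and "inj \<alpha>" and "inj \<beta>V"
  shows "semidirect_bracket br act \<alpha> \<beta> \<alpha>V \<beta>V (\<beta> p, \<beta>V a) (\<alpha> q, \<alpha>V b) =
           (br (\<beta> p) (\<alpha> q), act (\<beta> p) (\<alpha>V b) - act (\<beta> q) (\<alpha>V a))"
proof -
  have "inv \<alpha> (\<beta> (\<alpha> q)) = \<beta> q"
    using assms(1,2) by (metis comp_apply inv_f_f)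
  then show ?thesis
    using \<open>inj \<beta>V\<close> by (simp add: semidirect_bracket_def)
qed

lemma bihom_lie_rep_bracket_action:
  assumes rep: "bihom_lie_rep s br \<alpha> \<beta> sV act \<alpha>V \<beta>V" and "\<alpha> \<circ> \<beta> = \<beta> \<circ> \<alpha>"
  shows "act (br (\<beta> q) (\<alpha> r)) (\<beta>V (\<alpha>V v)) = \<alpha>V (act (\<beta> q) (act r v) - act (\<beta> r) (act q v))"
proof -
  have \<alpha>_equivariant: "\<And>p w. act (\<alpha> p) (\<alpha>V w) = \<alpha>V (act p w)"
    and rep_identity: "\<And>p q w. act (br (\<beta> p) q) (\<beta>V w) = act (\<alpha> (\<beta> p)) (act q w) - act (\<beta> q) (act (\<alpha> p) w)"
    and "Vector_Spaces.linear sV sV \<alpha>V"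
    using rep unfolding bihom_lie_rep_def by blast+
  have "act (br (\<beta> q) (\<alpha> r)) (\<beta>V (\<alpha>V v)) =
        act (\<alpha> (\<beta> q)) (act (\<alpha> r) (\<alpha>V v)) - act (\<beta> (\<alpha> r)) (act (\<alpha> q) (\<alpha>V v))"
    by (rule rep_identity)
  also have "\<dots> = act (\<alpha> (\<beta> q)) (\<alpha>V (act r v)) - act (\<alpha> (\<beta> r)) (\<alpha>V (act q v))"
    using \<open>\<alpha> \<circ> \<beta> = \<beta> \<circ> \<alpha>\<close> by (simp add: \<alpha>_equivariant fun_eq_iff)
  also have "\<dots> = \<alpha>V (act (\<beta> q) (act r v) - act (\<beta> r) (act q v))"
    by (simp add: \<alpha>_equivariant linear_map_simps[OF \<open>Vector_Spaces.linear sV sV \<alpha>V\<close>])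
  finally show ?thesis .
qed

lemma bihom_lie_rep_twisted_bracket_action:
  assumes rep: "bihom_lie_rep s br \<alpha> \<beta> sV act \<alpha>V \<beta>V" and "\<alpha> \<circ> \<beta> = \<beta> \<circ> \<alpha>"
    and "bij \<alpha>" and "bij \<alpha>V" and "bij \<beta>V"
  shows "act (inv \<alpha> (\<beta> (br (\<beta> q) (\<alpha> r)))) (\<alpha>V (\<beta>V a)) =
           act (\<beta> (\<beta> q)) (act (\<beta> r) (\<alpha>V a)) - act (\<beta> (\<beta> r)) (act (\<beta> q) (\<alpha>V a))"
proof -
  have \<alpha>_equivariant: "\<And>p w. act (\<alpha> p) (\<alpha>V w) = \<alpha>V (act p w)"
    and \<beta>_equivariant: "\<And>p w. act (\<beta> p) (\<beta>V w) = \<beta>V (act p w)"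
    and lin_\<beta>V: "Vector_Spaces.linear sV sV \<beta>V"
    and "\<alpha>V \<circ> \<beta>V = \<beta>V \<circ> \<alpha>V"
    using rep unfolding bihom_lie_rep_def by blast+
  then have \<alpha>V_\<beta>V: "\<alpha>V (\<beta>V w) = \<beta>V (\<alpha>V w)" for w
    by (metis comp_apply)
  have inv_\<alpha>V: "inv \<alpha>V (\<alpha>V w) = w" for w
    using \<open>bij \<alpha>V\<close> by (simp add: bij_is_inj)
  have inv_\<alpha>_action: "act (inv \<alpha> Y) w = inv \<alpha>V (act Y (\<alpha>V w))" for Y w
    using \<alpha>_equivariant[of "inv \<alpha> Y" w] \<open>bij \<alpha>\<close> by (simp add: bij_is_surj surj_f_inv_f inv_\<alpha>V)
  define X where "X = br (\<beta> q) (\<alpha> r)"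
  define v where "v = inv \<beta>V (\<alpha>V a)"
  have \<beta>V_v: "\<beta>V v = \<alpha>V a"
    unfolding v_def using \<open>bij \<beta>V\<close> by (simp add: bij_is_surj surj_f_inv_f)
  have "\<alpha>V (\<alpha>V a) = \<beta>V (\<alpha>V v)"
    by (simp flip: \<alpha>V_\<beta>V add: \<beta>V_v)
  have "act (inv \<alpha> (\<beta> X)) (\<alpha>V (\<beta>V a)) = inv \<alpha>V (act (\<beta> X) (\<beta>V (\<alpha>V (\<alpha>V a))))"
    by (simp add: inv_\<alpha>_action \<alpha>V_\<beta>V)
  also have "\<dots> = inv \<alpha>V (\<beta>V (act X (\<beta>V (\<alpha>V v))))"
    by (simp add: \<beta>_equivariant \<open>\<alpha>V (\<alpha>V a) = \<beta>V (\<alpha>V v)\<close>)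
  also have "\<dots> = \<beta>V (act (\<beta> q) (act r v) - act (\<beta> r) (act q v))"
    unfolding X_def bihom_lie_rep_bracket_action[OF rep \<open>\<alpha> \<circ> \<beta> = \<beta> \<circ> \<alpha>\<close>]
    by (simp flip: \<alpha>V_\<beta>V add: inv_\<alpha>V)
  also have "\<dots> = act (\<beta> (\<beta> q)) (act (\<beta> r) (\<beta>V v)) - act (\<beta> (\<beta> r)) (act (\<beta> q) (\<beta>V v))"
    by (simp add: \<beta>_equivariant linear_map_simps[OF lin_\<beta>V])
  finally show ?thesis
    by (simp add: X_def \<beta>V_v)
qed

lemma semidirect_bracket_jacobi:
  assumes alg: "bihom_lie_algebra s br \<alpha> \<beta>" and rep: "bihom_lie_rep s br \<alpha> \<beta> sV act \<alpha>V \<beta>V"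
    and "bij \<alpha>" and "bij \<alpha>V" and "bij \<beta>V"
  shows "semidirect_bracket br act \<alpha> \<beta> \<alpha>V \<beta>V (sum_map \<beta> \<beta>V (sum_map \<beta> \<beta>V x))
           (semidirect_bracket br act \<alpha> \<beta> \<alpha>V \<beta>V (sum_map \<beta> \<beta>V y) (sum_map \<alpha> \<alpha>V z)) +
         semidirect_bracket br act \<alpha> \<beta> \<alpha>V \<beta>V (sum_map \<beta> \<beta>V (sum_map \<beta> \<beta>V y))
           (semidirect_bracket br act \<alpha> \<beta> \<alpha>V \<beta>V (sum_map \<beta> \<beta>V z) (sum_map \<alpha> \<alpha>V x)) +
         semidirect_bracket br act \<alpha> \<beta> \<alpha>V \<beta>V (sum_map \<beta> \<beta>V (sum_map \<beta> \<beta>V z))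
           (semidirect_bracket br act \<alpha> \<beta> \<alpha>V \<beta>V (sum_map \<beta> \<beta>V x) (sum_map \<alpha> \<alpha>V y)) = 0"
proof -
  have "\<alpha> \<circ> \<beta> = \<beta> \<circ> \<alpha>"
    and jacobi: "\<And>p q r. br (\<beta> (\<beta> p)) (br (\<beta> q) (\<alpha> r)) + br (\<beta> (\<beta> q)) (br (\<beta> r) (\<alpha> p))
              + br (\<beta> (\<beta> r)) (br (\<beta> p) (\<alpha> q)) = 0"
    using alg unfolding bihom_lie_algebra_def by blast+
  have act: "bilinear_map s sV sV act"
    using rep unfolding bihom_lie_rep_def by blast
  note twisted = semidirect_bracket_twisted[OF \<open>\<alpha> \<circ> \<beta> = \<beta> \<circ> \<alpha>\<close> bij_is_inj[OF \<open>bij \<alpha>\<close>] bij_is_inj[OF \<open>bij \<beta>V\<close>]]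
  note twisted_action = bihom_lie_rep_twisted_bracket_action[OF rep \<open>\<alpha> \<circ> \<beta> = \<beta> \<circ> \<alpha>\<close> assms(3-5)]
  obtain p a q b r c where "x = (p, a)" and "y = (q, b)" and "z = (r, c)"
    by (metis surj_pair)
  then show ?thesis
    unfolding sum_map_def fst_conv snd_conv twisted
    using \<open>bij \<beta>V\<close>
    by (simp add: semidirect_bracket_def twisted_action bij_is_inj
        bilinear_map_simps[OF act] jacobi zero_prod_def)
qed

lemma bihom_lie_algebra_semidirect_product:
  assumes alg: "bihom_lie_algebra s br \<alpha> \<beta>" and rep: "bihom_lie_rep s br \<alpha> \<beta> sV act \<alpha>V \<beta>V"
    and "bij \<alpha>" and "bij \<alpha>V" and "bij \<beta>V"
  shows "bihom_lie_algebra (sum_scale s sV) (semidirect_bracket br act \<alpha> \<beta> \<alpha>V \<beta>V)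
           (sum_map \<alpha> \<alpha>V) (sum_map \<beta> \<beta>V)"
proof -
  have "vector_space s" and lin_\<alpha>: "Vector_Spaces.linear s s \<alpha>" and lin_\<beta>: "Vector_Spaces.linear s s \<beta>"
    and "bilinear_map s s s br" and "\<alpha> \<circ> \<beta> = \<beta> \<circ> \<alpha>"
    and skew: "\<And>p q. br (\<beta> p) (\<alpha> q) = - br (\<beta> q) (\<alpha> p)"
    using alg unfolding bihom_lie_algebra_def by blast+
  have "vector_space sV" and lin_\<alpha>V: "Vector_Spaces.linear sV sV \<alpha>V"
    and lin_\<beta>V: "Vector_Spaces.linear sV sV \<beta>V" and "\<alpha>V \<circ> \<beta>V = \<beta>V \<circ> \<alpha>V"
    and "bilinear_map s sV sV act"
    using rep unfolding bihom_lie_rep_def by blast+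
  note twisted = semidirect_bracket_twisted[OF \<open>\<alpha> \<circ> \<beta> = \<beta> \<circ> \<alpha>\<close> bij_is_inj[OF \<open>bij \<alpha>\<close>] bij_is_inj[OF \<open>bij \<beta>V\<close>]]
  show ?thesis
    unfolding bihom_lie_algebra_def
  proof (intro conjI allI)
    show "vector_space (sum_scale s sV)"
      by (rule vector_space_sum_scale) fact+
    show "Vector_Spaces.linear (sum_scale s sV) (sum_scale s sV) (sum_map \<alpha> \<alpha>V)"
      "Vector_Spaces.linear (sum_scale s sV) (sum_scale s sV) (sum_map \<beta> \<beta>V)"
      by (rule linear_sum_map; fact)+
    show "bilinear_map (sum_scale s sV) (sum_scale s sV) (sum_scale s sV)
        (semidirect_bracket br act \<alpha> \<beta> \<alpha>V \<beta>V)"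
      using bilinear_semidirect_bracket \<open>vector_space s\<close> \<open>vector_space sV\<close> \<open>bilinear_map s s s br\<close>
        \<open>bilinear_map s sV sV act\<close> lin_\<beta> linear_inv_of_bij[OF lin_\<alpha> \<open>bij \<alpha>\<close>] lin_\<alpha>V
        linear_inv_of_bij[OF lin_\<beta>V \<open>bij \<beta>V\<close>]
      by blast
    show "sum_map \<alpha> \<alpha>V \<circ> sum_map \<beta> \<beta>V = sum_map \<beta> \<beta>V \<circ> sum_map \<alpha> \<alpha>V"
      using \<open>\<alpha> \<circ> \<beta> = \<beta> \<circ> \<alpha>\<close> \<open>\<alpha>V \<circ> \<beta>V = \<beta>V \<circ> \<alpha>V\<close> by (simp add: fun_eq_iff sum_map_def)
  next
    fix x y :: "'b \<times> 'c"
    obtain p a q b where "x = (p, a)" and "y = (q, b)"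
      by (metis surj_pair)
    then show "semidirect_bracket br act \<alpha> \<beta> \<alpha>V \<beta>V (sum_map \<beta> \<beta>V x) (sum_map \<alpha> \<alpha>V y) =
        - semidirect_bracket br act \<alpha> \<beta> \<alpha>V \<beta>V (sum_map \<beta> \<beta>V y) (sum_map \<alpha> \<alpha>V x)"
      unfolding sum_map_def fst_conv snd_conv twisted by (simp add: skew[of p q])
  next
    fix x y z
    show "semidirect_bracket br act \<alpha> \<beta> \<alpha>V \<beta>V (sum_map \<beta> \<beta>V (sum_map \<beta> \<beta>V x))
           (semidirect_bracket br act \<alpha> \<beta> \<alpha>V \<beta>V (sum_map \<beta> \<beta>V y) (sum_map \<alpha> \<alpha>V z)) +
         semidirect_bracket br act \<alpha> \<beta> \<alpha>V \<beta>V (sum_map \<beta> \<beta>V (sum_map \<beta> \<beta>V y))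
           (semidirect_bracket br act \<alpha> \<beta> \<alpha>V \<beta>V (sum_map \<beta> \<beta>V z) (sum_map \<alpha> \<alpha>V x)) +
         semidirect_bracket br act \<alpha> \<beta> \<alpha>V \<beta>V (sum_map \<beta> \<beta>V (sum_map \<beta> \<beta>V z))
           (semidirect_bracket br act \<alpha> \<beta> \<alpha>V \<beta>V (sum_map \<beta> \<beta>V x) (sum_map \<alpha> \<alpha>V y)) = 0"
      by (rule semidirect_bracket_jacobi[OF alg rep assms(3-5)])
  qed
qed

lemma bilinear_map_linear_combination:
  assumes f: "bilinear_map s1 s2 s3 f" and g: "bilinear_map s1 s2 s3 g"
  shows "bilinear_map s1 s2 s3 (\<lambda>x y. s3 c (f x y) + s3 d (g x y))"
proof -
  have "vector_space s1" "vector_space s2" "vector_space s3"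
    using f unfolding bilinear_map_def linear_iff by blast+
  then have "module s3"
    by (simp add: module_iff_vector_space)
  then show ?thesis
    using \<open>vector_space s1\<close> \<open>vector_space s2\<close> \<open>vector_space s3\<close>
    unfolding bilinear_map_def linear_iff
    by (simp add: bilinear_map_simps[OF f] bilinear_map_simps[OF g] module.scale_right_distrib
        module.scale_scale mult.commute algebra_simps)
qed

lemma compatible_bihom_lie_rep_linear_combination:
  assumes "compatible_bihom_lie_rep s br1 br2 \<alpha> \<beta> sV act1 act2 \<alpha>V \<beta>V"
  shows "bihom_lie_rep s (\<lambda>x y. s c (br1 x y) + s d (br2 x y)) \<alpha> \<beta> sV
           (\<lambda>p v. sV c (act1 p v) + sV d (act2 p v)) \<alpha>V \<beta>V"
proof -
  have "vector_space sV" and lin_\<alpha>V: "Vector_Spaces.linear sV sV \<alpha>V"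
    and lin_\<beta>V: "Vector_Spaces.linear sV sV \<beta>V" and "\<alpha>V \<circ> \<beta>V = \<beta>V \<circ> \<alpha>V"
    and act1: "bilinear_map s sV sV act1"
    and \<alpha>_equivariant1: "\<And>p v. act1 (\<alpha> p) (\<alpha>V v) = \<alpha>V (act1 p v)"
    and \<beta>_equivariant1: "\<And>p v. act1 (\<beta> p) (\<beta>V v) = \<beta>V (act1 p v)"
    and rep1: "\<And>p q v. act1 (br1 (\<beta> p) q) (\<beta>V v) =
                 act1 (\<alpha> (\<beta> p)) (act1 q v) - act1 (\<beta> q) (act1 (\<alpha> p) v)"
    and act2: "bilinear_map s sV sV act2"
    and \<alpha>_equivariant2: "\<And>p v. act2 (\<alpha> p) (\<alpha>V v) = \<alpha>V (act2 p v)"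
    and \<beta>_equivariant2: "\<And>p v. act2 (\<beta> p) (\<beta>V v) = \<beta>V (act2 p v)"
    and rep2: "\<And>p q v. act2 (br2 (\<beta> p) q) (\<beta>V v) =
                 act2 (\<alpha> (\<beta> p)) (act2 q v) - act2 (\<beta> q) (act2 (\<alpha> p) v)"
    and compatible: "\<And>p q v. act2 (br1 (\<beta> p) q) (\<beta>V v) + act1 (br2 (\<beta> p) q) (\<beta>V v) =
        act1 (\<alpha> (\<beta> p)) (act2 q v) - act2 (\<beta> q) (act1 (\<alpha> p) v)
        + act2 (\<alpha> (\<beta> p)) (act1 q v) - act1 (\<beta> q) (act2 (\<alpha> p) v)"
    using assms unfolding compatible_bihom_lie_rep_def bihom_lie_rep_def by blast+
  have "module sV"
    using \<open>vector_space sV\<close> by (simp add: module_iff_vector_space)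
  note scale_simps = module.scale_right_distrib[OF \<open>module sV\<close>] module.scale_scale[OF \<open>module sV\<close>]
    module.scale_right_diff_distrib[OF \<open>module sV\<close>]
  show ?thesis
    unfolding bihom_lie_rep_def
  proof (intro conjI allI)
    show "bilinear_map s sV sV (\<lambda>p v. sV c (act1 p v) + sV d (act2 p v))"
      by (rule bilinear_map_linear_combination[OF act1 act2])
  next
    fix p v
    show "sV c (act1 (\<alpha> p) (\<alpha>V v)) + sV d (act2 (\<alpha> p) (\<alpha>V v)) = \<alpha>V (sV c (act1 p v) + sV d (act2 p v))"
      by (simp add: \<alpha>_equivariant1 \<alpha>_equivariant2 linear_map_simps[OF lin_\<alpha>V])
    show "sV c (act1 (\<beta> p) (\<beta>V v)) + sV d (act2 (\<beta> p) (\<beta>V v)) = \<beta>V (sV c (act1 p v) + sV d (act2 p v))"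
      by (simp add: \<beta>_equivariant1 \<beta>_equivariant2 linear_map_simps[OF lin_\<beta>V])
  next
    fix p q v
    have compatible': "act1 (br2 (\<beta> p) q) (\<beta>V v) =
        act1 (\<alpha> (\<beta> p)) (act2 q v) - act2 (\<beta> q) (act1 (\<alpha> p) v)
        + act2 (\<alpha> (\<beta> p)) (act1 q v) - act1 (\<beta> q) (act2 (\<alpha> p) v) - act2 (br1 (\<beta> p) q) (\<beta>V v)"
      using compatible[of p q v] by (simp add: eq_diff_eq add.commute)
    \<comment> \<open>The coefficients of c^2, d^2 and c*d are the identities rep1, rep2 and compatible.\<close>
    show "sV c (act1 (s c (br1 (\<beta> p) q) + s d (br2 (\<beta> p) q)) (\<beta>V v)) +
          sV d (act2 (s c (br1 (\<beta> p) q) + s d (br2 (\<beta> p) q)) (\<beta>V v)) =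
          sV c (act1 (\<alpha> (\<beta> p)) (sV c (act1 q v) + sV d (act2 q v))) +
          sV d (act2 (\<alpha> (\<beta> p)) (sV c (act1 q v) + sV d (act2 q v))) -
          (sV c (act1 (\<beta> q) (sV c (act1 (\<alpha> p) v) + sV d (act2 (\<alpha> p) v))) +
           sV d (act2 (\<beta> q) (sV c (act1 (\<alpha> p) v) + sV d (act2 (\<alpha> p) v))))"
      by (simp add: bilinear_map_simps[OF act1] bilinear_map_simps[OF act2] scale_simps
          rep1 rep2 compatible' algebra_simps mult.commute)
  qed fact+
qed

lemma semidirect_bracket_linear_combination:
  assumes "vector_space sV"
  shows "(\<lambda>x y. sum_scale s sV c (semidirect_bracket br1 act1 \<alpha> \<beta> \<alpha>V \<beta>V x y) +
                 sum_scale s sV d (semidirect_bracket br2 act2 \<alpha> \<beta> \<alpha>V \<beta>V x y)) =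
         semidirect_bracket (\<lambda>x y. s c (br1 x y) + s d (br2 x y))
           (\<lambda>p v. sV c (act1 p v) + sV d (act2 p v)) \<alpha> \<beta> \<alpha>V \<beta>V"
  using assms
  by (simp add: fun_eq_iff sum_scale_def semidirect_bracket_def module_iff_vector_space
      module.scale_right_diff_distrib algebra_simps)

theorem proposition3p6:
  fixes s :: "'k::field \<Rightarrow> 'g::ab_group_add \<Rightarrow> 'g"
    and sV :: "'k \<Rightarrow> 'v::ab_group_add \<Rightarrow> 'v"
    and br1 br2 :: "'g \<Rightarrow> 'g \<Rightarrow> 'g"
    and \<alpha> \<beta> :: "'g \<Rightarrow> 'g"
    and act1 act2 :: "'g \<Rightarrow> 'v \<Rightarrow> 'v"
    and \<alpha>V \<beta>V :: "'v \<Rightarrow> 'v"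
  assumes "compatible_bihom_lie_algebra s br1 br2 \<alpha> \<beta>"
    and "compatible_bihom_lie_rep s br1 br2 \<alpha> \<beta> sV act1 act2 \<alpha>V \<beta>V"
    and "bij \<alpha>" and "bij \<beta>" and "bij \<alpha>V" and "bij \<beta>V"
  shows "compatible_bihom_lie_algebra (sum_scale s sV)
           (semidirect_bracket br1 act1 \<alpha> \<beta> \<alpha>V \<beta>V)
           (semidirect_bracket br2 act2 \<alpha> \<beta> \<alpha>V \<beta>V)
           (sum_map \<alpha> \<alpha>V) (sum_map \<beta> \<beta>V)"
proof -
  have alg1: "bihom_lie_algebra s br1 \<alpha> \<beta>" and alg2: "bihom_lie_algebra s br2 \<alpha> \<beta>"
    and alg_combination: "\<And>c d. bihom_lie_algebra s (\<lambda>x y. s c (br1 x y) + s d (br2 x y)) \<alpha> \<beta>"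
    using assms(1) unfolding compatible_bihom_lie_algebra_def by blast+
  have rep1: "bihom_lie_rep s br1 \<alpha> \<beta> sV act1 \<alpha>V \<beta>V" and rep2: "bihom_lie_rep s br2 \<alpha> \<beta> sV act2 \<alpha>V \<beta>V"
    using assms(2) unfolding compatible_bihom_lie_rep_def by blast+
  have "vector_space sV"
    using rep1 unfolding bihom_lie_rep_def by blast
  note semidirect = bihom_lie_algebra_semidirect_product[OF _ _ \<open>bij \<alpha>\<close> \<open>bij \<alpha>V\<close> \<open>bij \<beta>V\<close>]
  show ?thesis
    unfolding compatible_bihom_lie_algebra_def
      semidirect_bracket_linear_combination[OF \<open>vector_space sV\<close>]
    using semidirect[OF alg1 rep1] semidirect[OF alg2 rep2]
      semidirect[OF alg_combination compatible_bihom_lie_rep_linear_combination[OF assms(2)]]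
    by blast
qed

end
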